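(* Let $k,l\ge1$ with $k\ne l$, $1\le r\le4kl$, and let $\overline{\mathcal{B}}(2k,2l;r)$ be the set of boards in $\mathcal{B}(2k,2l;r)$ whose board partition $(\lambda_1,\lambda_2,\lambda_3,\lambda_4)$ satisfies: $\lambda_1\ge\lambda_i$ for all $i>1$; if $\lambda_1=\lambda_2$ then $\lambda_3\ge\lambda_4$; if $\lambda_1=\lambda_3$ then $\lambda_2\ge\lambda_4$; if $\lambda_1=\lambda_4$ then $\lambda_2\ge\lambda_3$. For a board partition of a board in $\overline{\mathcal{B}}(2k,2l;r)$, let $K\le\langle H,V\rangle$ be the subgroup of symmetries preserving the set of all boards with that board partition. Then: if $\lambda_1=\lambda_2=\lambda_3=\lambda_4$, $K=\langle H,V\rangle$ and $[\langle H,V\rangle:K]=1$; if $\lambda_1=\lambda_2>\lambda_3=\lambda_4$, $K=\langle V\rangle$ and the index is 2; if $\lambda_1=\lambda_3>\lambda_2=\lambda_4$, $K=\langle R_{180}\rangle$ and the index is 2; if $\lambda_1=\lambda_4>\lambda_2=\lambda_3$, $K=\langle H\rangle$ and the index is 2; in all other cases $K$ is trivial and the index is 4.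
   Context: A $2k\times2l$ grid ($2k$ rows numbered top to bottom, $2l$ columns left to right); $\mathcal{B}(2k,2l;r)$ is the set of boards, i.e. subsets of exactly $r$ blocked cells. $\langle H,V\rangle=\{R_0,H,V,R_{180}\}$ acts on boards, where $H$ is reflection across the horizontal midline (swapping top and bottom), $V$ reflection across the vertical midline (swapping left and right), $R_{180}$ the 180-degree rotation. Quadrants: $Q_1$ = rows $1..k$, cols $1..l$; $Q_2$ = rows $1..k$, cols $l+1..2l$; $Q_3$ = rows $k+1..2k$, cols $l+1..2l$; $Q_4$ = rows $k+1..2k$, cols $1..l$; the board partition is $(\lambda_1,\dots,\lambda_4)$ with $\lambda_i$ the number of blocked cells in $Q_i$. *)

theory Defs
  imports Main
begin

text \<open>Cells of the 2k x 2l grid are pairs (row, column), rows 1..2k (top to bottom),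
 columns 1..2l (left to right).\<close>

definition grid :: "nat \<Rightarrow> nat \<Rightarrow> (nat \<times> nat) set" where
  "grid k l = {1..2*k} \<times> {1..2*l}"

definition boards :: "nat \<Rightarrow> nat \<Rightarrow> nat \<Rightarrow> (nat \<times> nat) set set" where
  "boards k l r = {B. B \<subseteq> grid k l \<and> card B = r}"

datatype sym = R0 | H | V | R180

fun act :: "nat \<Rightarrow> nat \<Rightarrow> sym \<Rightarrow> nat \<times> nat \<Rightarrow> nat \<times> nat" where
  "act k l R0 (i, j) = (i, j)"
| "act k l H (i, j) = (2*k + 1 - i, j)"
| "act k l V (i, j) = (i, 2*l + 1 - j)"
| "act k l R180 (i, j) = (2*k + 1 - i, 2*l + 1 - j)"

definition act_board :: "nat \<Rightarrow> nat \<Rightarrow> sym \<Rightarrow> (nat \<times> nat) set \<Rightarrow> (nat \<times> nat) set" where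
  "act_board k l g B = act k l g ` B"

fun quadrant :: "nat \<Rightarrow> nat \<Rightarrow> nat \<Rightarrow> (nat \<times> nat) set" where
  "quadrant k l (Suc 0) = {1..k} \<times> {1..l}"
| "quadrant k l (Suc (Suc 0)) = {1..k} \<times> {l+1..2*l}"
| "quadrant k l (Suc (Suc (Suc 0))) = {k+1..2*k} \<times> {l+1..2*l}"
| "quadrant k l (Suc (Suc (Suc (Suc 0)))) = {k+1..2*k} \<times> {1..l}"
| "quadrant k l _ = {}"

definition board_partition :: "nat \<Rightarrow> nat \<Rightarrow> (nat \<times> nat) set \<Rightarrow> nat \<Rightarrow> nat" where
  "board_partition k l B i = card (B \<inter> quadrant k l i)"

definition boards_bar :: "nat \<Rightarrow> nat \<Rightarrow> nat \<Rightarrow> (nat \<times> nat) set set" where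
  "boards_bar k l r = {B \<in> boards k l r.
     let lam = board_partition k l B in
       (\<forall>i\<in>{2,3,4}. lam 1 \<ge> lam i)
     \<and> (lam 1 = lam 2 \<longrightarrow> lam 3 \<ge> lam 4)
     \<and> (lam 1 = lam 3 \<longrightarrow> lam 2 \<ge> lam 4)
     \<and> (lam 1 = lam 4 \<longrightarrow> lam 2 \<ge> lam 3)}"

definition boards_with_partition ::
  "nat \<Rightarrow> nat \<Rightarrow> nat \<Rightarrow> (nat \<Rightarrow> nat) \<Rightarrow> (nat \<times> nat) set set" where
  "boards_with_partition k l r lam =
     {B \<in> boards k l r. \<forall>i\<in>{1,2,3,4}. board_partition k l B i = lam i}"

definition stab :: "nat \<Rightarrow> nat \<Rightarrow> nat \<Rightarrow> (nat \<Rightarrow> nat) \<Rightarrow> sym set" where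
  "stab k l r lam = {g. act_board k l g ` boards_with_partition k l r lam
                       = boards_with_partition k l r lam}"

definition hv_index :: "sym set \<Rightarrow> nat" where
  "hv_index K = card (UNIV :: sym set) div card K"

end

theory Submission
  imports Defs
begin

text \<open>Every symmetry acts on the grid as an involution that permutes the four quadrants, so it maps
  a board with partition \<open>\<lambda>\<close> to a board with partition \<open>\<lambda> \<circ> \<pi>\<^sub>g\<close>, where \<open>\<pi>\<^sub>g\<close> is the
  induced permutation of quadrant indices. Hence \<open>g\<close> preserves the set of boards with partition
  \<open>\<lambda>\<close> exactly when \<open>\<lambda>\<close> is \<open>\<pi>\<^sub>g\<close>-invariant, and the normalisation built into \<open>boards_bar\<close>
  (\<open>\<lambda>\<^sub>1\<close> maximal, ties broken) leaves only the listed possibilities.\<close>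

fun quadrant_perm :: "sym \<Rightarrow> nat \<Rightarrow> nat" where
  "quadrant_perm R0 i = i"
| "quadrant_perm H i =
     (if i = 1 then 4 else if i = 4 then 1 else if i = 2 then 3 else if i = 3 then 2 else i)"
| "quadrant_perm V i =
     (if i = 1 then 2 else if i = 2 then 1 else if i = 3 then 4 else if i = 4 then 3 else i)"
| "quadrant_perm R180 i =
     (if i = 1 then 3 else if i = 3 then 1 else if i = 2 then 4 else if i = 4 then 2 else i)"

lemma quadrant_perm_in: "i \<in> {1,2,3,4} \<Longrightarrow> quadrant_perm g i \<in> {1,2,3,4}"
  by (cases g) auto

definition partition_symmetries :: "(nat \<Rightarrow> nat) \<Rightarrow> sym set" where
  "partition_symmetries lam = {g. \<forall>i\<in>{1,2,3,4}. lam (quadrant_perm g i) = lam i}"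

lemma partition_symmetries_eq:
  "partition_symmetries lam = {g. g = R0
    \<or> g = H \<and> lam 1 = lam 4 \<and> lam 2 = lam 3
    \<or> g = V \<and> lam 1 = lam 2 \<and> lam 3 = lam 4
    \<or> g = R180 \<and> lam 1 = lam 3 \<and> lam 2 = lam 4}" (is "_ = ?K")
proof (rule set_eqI)
  fix g
  show "g \<in> partition_symmetries lam \<longleftrightarrow> g \<in> ?K"
    by (cases g) (auto simp: partition_symmetries_def)
qed

definition normalised_partition :: "(nat \<Rightarrow> nat) \<Rightarrow> bool" where
  "normalised_partition lam \<longleftrightarrow>
       (\<forall>i\<in>{2,3,4}. lam 1 \<ge> lam i)
     \<and> (lam 1 = lam 2 \<longrightarrow> lam 3 \<ge> lam 4)
     \<and> (lam 1 = lam 3 \<longrightarrow> lam 2 \<ge> lam 4)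
     \<and> (lam 1 = lam 4 \<longrightarrow> lam 2 \<ge> lam 3)"

lemma boards_bar_eq:
  "boards_bar k l r = {B \<in> boards k l r. normalised_partition (board_partition k l B)}"
  unfolding boards_bar_def normalised_partition_def Let_def ..

lemma UNIV_sym: "(UNIV :: sym set) = {R0, H, V, R180}"
  using sym.exhaust by auto

lemma card_UNIV_sym: "card (UNIV :: sym set) = 4"
  by (simp add: UNIV_sym)

lemma hv_index_simps [simp]:
  "hv_index {R0, H, V, R180} = 1" "hv_index {R0, V} = 2" "hv_index {R0, R180} = 2"
  "hv_index {R0, H} = 2" "hv_index {R0} = 4"
  by (simp_all add: hv_index_def card_UNIV_sym flip: numeral_2_eq_2)

lemma partition_symmetries_normalised:
  fixes lam :: "nat \<Rightarrow> nat"
  assumes "normalised_partition lam"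
  defines "K \<equiv> partition_symmetries lam"
  shows "(lam 1 = lam 2 \<and> lam 2 = lam 3 \<and> lam 3 = lam 4
            \<longrightarrow> K = {R0, H, V, R180} \<and> hv_index K = 1)
       \<and> (lam 1 = lam 2 \<and> lam 2 > lam 3 \<and> lam 3 = lam 4
            \<longrightarrow> K = {R0, V} \<and> hv_index K = 2)
       \<and> (lam 1 = lam 3 \<and> lam 3 > lam 2 \<and> lam 2 = lam 4
            \<longrightarrow> K = {R0, R180} \<and> hv_index K = 2)
       \<and> (lam 1 = lam 4 \<and> lam 4 > lam 2 \<and> lam 2 = lam 3
            \<longrightarrow> K = {R0, H} \<and> hv_index K = 2)
       \<and> (\<not> (lam 1 = lam 2 \<and> lam 2 = lam 3 \<and> lam 3 = lam 4)
          \<and> \<not> (lam 1 = lam 2 \<and> lam 2 > lam 3 \<and> lam 3 = lam 4)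
          \<and> \<not> (lam 1 = lam 3 \<and> lam 3 > lam 2 \<and> lam 2 = lam 4)
          \<and> \<not> (lam 1 = lam 4 \<and> lam 4 > lam 2 \<and> lam 2 = lam 3)
            \<longrightarrow> K = {R0} \<and> hv_index K = 4)"
proof (intro conjI impI)
  assume "lam 1 = lam 2 \<and> lam 2 = lam 3 \<and> lam 3 = lam 4"
  then have "K = {R0, H, V, R180}" by (auto simp: K_def partition_symmetries_eq)
  then show "K = {R0, H, V, R180}" "hv_index K = 1" by simp_all
next
  assume "lam 1 = lam 2 \<and> lam 2 > lam 3 \<and> lam 3 = lam 4"
  then have "K = {R0, V}" by (auto simp: K_def partition_symmetries_eq)
  then show "K = {R0, V}" "hv_index K = 2" by simp_all
next
  assume "lam 1 = lam 3 \<and> lam 3 > lam 2 \<and> lam 2 = lam 4"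
  then have "K = {R0, R180}" by (auto simp: K_def partition_symmetries_eq)
  then show "K = {R0, R180}" "hv_index K = 2" by simp_all
next
  assume "lam 1 = lam 4 \<and> lam 4 > lam 2 \<and> lam 2 = lam 3"
  then have "K = {R0, H}" by (auto simp: K_def partition_symmetries_eq)
  then show "K = {R0, H}" "hv_index K = 2" by simp_all
next
  assume "\<not> (lam 1 = lam 2 \<and> lam 2 = lam 3 \<and> lam 3 = lam 4)
        \<and> \<not> (lam 1 = lam 2 \<and> lam 2 > lam 3 \<and> lam 3 = lam 4)
        \<and> \<not> (lam 1 = lam 3 \<and> lam 3 > lam 2 \<and> lam 2 = lam 4)
        \<and> \<not> (lam 1 = lam 4 \<and> lam 4 > lam 2 \<and> lam 2 = lam 3)"
  moreover have "lam 2 \<le> lam 1" "lam 3 \<le> lam 1" "lam 4 \<le> lam 1"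
    "lam 1 = lam 2 \<longrightarrow> lam 4 \<le> lam 3"
    "lam 1 = lam 3 \<longrightarrow> lam 4 \<le> lam 2"
    "lam 1 = lam 4 \<longrightarrow> lam 3 \<le> lam 2"
    using assms(1) by (simp_all add: normalised_partition_def)
  ultimately have "\<not> (lam 1 = lam 4 \<and> lam 2 = lam 3)" "\<not> (lam 1 = lam 2 \<and> lam 3 = lam 4)"
    "\<not> (lam 1 = lam 3 \<and> lam 2 = lam 4)"
    by (clarsimp simp: not_less)+
  then have "K = {R0}" by (auto simp: K_def partition_symmetries_eq)
  then show "K = {R0}" "hv_index K = 4" by simp_all
qed

lemma act_in_grid: "p \<in> grid k l \<Longrightarrow> act k l g p \<in> grid k l"
  by (cases g; cases p) (auto simp: grid_def)

lemma act_act: "p \<in> grid k l \<Longrightarrow> act k l g (act k l g p) = p"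
  by (cases g; cases p) (auto simp: grid_def)

lemma inj_on_act_grid: "inj_on (act k l g) (grid k l)"
  by (metis act_act inj_onI)

lemma act_in_quadrant_iff:
  assumes "p \<in> grid k l" "i \<in> {1,2,3,4}"
  shows "act k l g p \<in> quadrant k l i \<longleftrightarrow> p \<in> quadrant k l (quadrant_perm g i)"
  using assms by (cases g; cases p) (auto simp: grid_def numeral_eq_Suc)

lemma act_board_act_board:
  assumes "B \<subseteq> grid k l"
  shows "act_board k l g (act_board k l g B) = B"
proof -
  have "act_board k l g (act_board k l g B) = (\<lambda>p. act k l g (act k l g p)) ` B"
    by (simp add: act_board_def image_image)
  also have "\<dots> = (\<lambda>p. p) ` B"
    by (rule image_cong) (use assms act_act in auto)
  finally show ?thesis by simp
qed

lemma act_board_in_boards: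
  assumes "B \<in> boards k l r"
  shows "act_board k l g B \<in> boards k l r"
proof -
  have grid: "B \<subseteq> grid k l" and "card B = r"
    using assms by (auto simp: boards_def)
  moreover have "card (act_board k l g B) = card B"
    unfolding act_board_def using inj_on_subset[OF inj_on_act_grid grid] by (rule card_image)
  moreover have "act_board k l g B \<subseteq> grid k l"
    using grid act_in_grid by (auto simp: act_board_def)
  ultimately show ?thesis
    by (simp add: boards_def)
qed

lemma board_partition_act_board:
  assumes "B \<subseteq> grid k l" "i \<in> {1,2,3,4}"
  shows "board_partition k l (act_board k l g B) i = board_partition k l B (quadrant_perm g i)"
proof -
  have "act k l g p \<in> quadrant k l i \<longleftrightarrow> p \<in> quadrant k l (quadrant_perm g i)" if "p \<in> B" for p
    using act_in_quadrant_iff[OF _ assms(2)] assms(1) that by blast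
  then have "act_board k l g B \<inter> quadrant k l i = act k l g ` (B \<inter> quadrant k l (quadrant_perm g i))"
    by (auto simp: act_board_def)
  moreover have "inj_on (act k l g) (B \<inter> quadrant k l (quadrant_perm g i))"
    using inj_on_subset[OF inj_on_act_grid] assms(1) by blast
  ultimately show ?thesis
    by (simp add: board_partition_def card_image)
qed

lemma act_board_in_boards_with_partition:
  assumes "B \<in> boards_with_partition k l r lam"
    and invariant: "\<forall>i\<in>{1,2,3,4}. lam (quadrant_perm g i) = lam i"
  shows "act_board k l g B \<in> boards_with_partition k l r lam"
proof -
  have boards: "B \<in> boards k l r" and partition: "\<forall>i\<in>{1,2,3,4}. board_partition k l B i = lam i"
    using assms(1) by (auto simp: boards_with_partition_def)
  have grid: "B \<subseteq> grid k l"
    using boards by (simp add: boards_def)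
  have "board_partition k l (act_board k l g B) i = lam i" if i: "i \<in> {1,2,3,4}" for i
  proof -
    have "board_partition k l (act_board k l g B) i = board_partition k l B (quadrant_perm g i)"
      using board_partition_act_board[OF grid i] .
    also have "\<dots> = lam (quadrant_perm g i)"
      using partition quadrant_perm_in[OF i] by blast
    also have "\<dots> = lam i"
      using invariant i by blast
    finally show ?thesis .
  qed
  then show ?thesis
    using act_board_in_boards[OF boards] by (simp add: boards_with_partition_def)
qed

lemma partition_invariant_if_act_board_in_boards_with_partition:
  assumes "B \<in> boards_with_partition k l r lam"
    and "act_board k l g B \<in> boards_with_partition k l r lam"
    and i: "i \<in> {1,2,3,4}"
  shows "lam (quadrant_perm g i) = lam i"
proof -
  have grid: "B \<subseteq> grid k l"
    and partition: "\<forall>i\<in>{1,2,3,4}. board_partition k l B i = lam i"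
    and partition_act: "\<forall>i\<in>{1,2,3,4}. board_partition k l (act_board k l g B) i = lam i"
    using assms(1,2) by (auto simp: boards_with_partition_def boards_def)
  have "lam (quadrant_perm g i) = board_partition k l B (quadrant_perm g i)"
    using bspec[OF partition quadrant_perm_in[OF i]] by simp
  also have "\<dots> = board_partition k l (act_board k l g B) i"
    using board_partition_act_board[OF grid i] by simp
  also have "\<dots> = lam i"
    using partition_act i by blast
  finally show ?thesis .
qed

lemma stab_eq_partition_symmetries:
  assumes "boards_with_partition k l r lam \<noteq> {}"
  shows "stab k l r lam = partition_symmetries lam"
proof (intro set_eqI iffI)
  fix g
  assume "g \<in> stab k l r lam"
  obtain B where B: "B \<in> boards_with_partition k l r lam"
    using assms by blast
  with \<open>g \<in> stab k l r lam\<close> have "act_board k l g B \<in> boards_with_partition k l r lam"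
    unfolding stab_def by blast
  with B show "g \<in> partition_symmetries lam"
    using partition_invariant_if_act_board_in_boards_with_partition
    unfolding partition_symmetries_def by blast
next
  fix g
  let ?S = "boards_with_partition k l r lam"
  assume "g \<in> partition_symmetries lam"
  then have invariant: "\<forall>i\<in>{1,2,3,4}. lam (quadrant_perm g i) = lam i"
    by (simp add: partition_symmetries_def)
  then have "act_board k l g ` ?S \<subseteq> ?S"
    using act_board_in_boards_with_partition by blast
  moreover have "?S \<subseteq> act_board k l g ` ?S"
  proof
    fix B assume "B \<in> ?S"
    then have "B = act_board k l g (act_board k l g B)" "act_board k l g B \<in> ?S"
      using act_board_act_board act_board_in_boards_with_partition[OF _ invariant]
      by (auto simp: boards_with_partition_def boards_def)
    then show "B \<in> act_board k l g ` ?S" by blast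
  qed
  ultimately show "g \<in> stab k l r lam"
    unfolding stab_def by blast
qed

theorem corollary4p6:
  fixes k l r :: nat and B :: "(nat \<times> nat) set"
  assumes "k \<ge> 1" and "l \<ge> 1" and "k \<noteq> l" and "1 \<le> r" and "r \<le> 4*k*l"
    and "B \<in> boards_bar k l r"
  defines "lam \<equiv> board_partition k l B"
  defines "K \<equiv> stab k l r lam"
  shows "(lam 1 = lam 2 \<and> lam 2 = lam 3 \<and> lam 3 = lam 4
            \<longrightarrow> K = {R0, H, V, R180} \<and> hv_index K = 1)
       \<and> (lam 1 = lam 2 \<and> lam 2 > lam 3 \<and> lam 3 = lam 4
            \<longrightarrow> K = {R0, V} \<and> hv_index K = 2)
       \<and> (lam 1 = lam 3 \<and> lam 3 > lam 2 \<and> lam 2 = lam 4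
            \<longrightarrow> K = {R0, R180} \<and> hv_index K = 2)
       \<and> (lam 1 = lam 4 \<and> lam 4 > lam 2 \<and> lam 2 = lam 3
            \<longrightarrow> K = {R0, H} \<and> hv_index K = 2)
       \<and> (\<not> (lam 1 = lam 2 \<and> lam 2 = lam 3 \<and> lam 3 = lam 4)
          \<and> \<not> (lam 1 = lam 2 \<and> lam 2 > lam 3 \<and> lam 3 = lam 4)
          \<and> \<not> (lam 1 = lam 3 \<and> lam 3 > lam 2 \<and> lam 2 = lam 4)
          \<and> \<not> (lam 1 = lam 4 \<and> lam 4 > lam 2 \<and> lam 2 = lam 3)
            \<longrightarrow> K = {R0} \<and> hv_index K = 4)"
proof -
  have "B \<in> boards_with_partition k l r lam" and normalised: "normalised_partition lam"
    using assms(6) by (simp_all add: boards_bar_eq boards_with_partition_def lam_def)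
  then have "K = partition_symmetries lam"
    unfolding K_def by (intro stab_eq_partition_symmetries) blast
  then show ?thesis
    using partition_symmetries_normalised[OF normalised] by (simp only:)
qed

end
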